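(* For the system $S'=\Lambda-\beta\frac{SB}{B+D}-(\mu+\psi)S+wR$, $V'=\psi S-\sigma\beta\frac{VB}{B+D}-\mu V$, $I'=\beta\frac{SB}{B+D}+\sigma\beta\frac{VB}{B+D}-(\mu+\gamma)I$, $R'=\gamma I-(\mu+w)R$, $B'=\eta I-\delta B$, there exist parameter values for which ${\cal R}_0<1$ and there exist exactly two positive steady states, one stable and one unstable.
   Context: All parameters $\Lambda,\beta,D,\mu,\psi,w,\sigma,\gamma,\eta,\delta$ are positive constants. The disease-free equilibrium is $(S_0,V_0,0,0,0)$ with $S_0=\frac{\Lambda}{\mu+\psi}$, $V_0=\frac{\Lambda\psi}{\mu(\mu+\psi)}$, and the basic reproductive ratio is ${\cal R}_0=\frac{\eta\beta(S_0+\sigma V_0)}{D\delta(\mu+\gamma)}$. A positive steady state is a steady state with all components positive. *)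

theory Defs
  imports "HOL-Analysis.Analysis" "HOL-Library.Numeral_Type"
begin

type_synonym params = "real \<times> real \<times> real \<times> real \<times> real \<times> real \<times> real \<times> real \<times> real \<times> real"

definition vec5 :: "real \<Rightarrow> real \<Rightarrow> real \<Rightarrow> real \<Rightarrow> real \<Rightarrow> real^5" where
  "vec5 a b c d e = (\<chi> i. if i = 1 then a else if i = 2 then b else if i = 3 then c
                          else if i = 4 then d else e)"

definition sys :: "params \<Rightarrow> real^5 \<Rightarrow> real^5" where
  "sys p x = (case p of (Lam, \<beta>, D, \<mu>, \<psi>, w, \<sigma>, \<gamma>, \<eta>, \<delta>) \<Rightarrow>
     (let S = x$1; V = x$2; I = x$3; R = x$4; B = x$5 in
      vec5 (Lam - \<beta> * (S * B / (B + D)) - (\<mu> + \<psi>) * S + w * R)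
           (\<psi> * S - \<sigma> * \<beta> * (V * B / (B + D)) - \<mu> * V)
           (\<beta> * (S * B / (B + D)) + \<sigma> * \<beta> * (V * B / (B + D)) - (\<mu> + \<gamma>) * I)
           (\<gamma> * I - (\<mu> + w) * R)
           (\<eta> * I - \<delta> * B)))"

definition params_pos :: "params \<Rightarrow> bool" where
  "params_pos p = (case p of (Lam, \<beta>, D, \<mu>, \<psi>, w, \<sigma>, \<gamma>, \<eta>, \<delta>) \<Rightarrow>
     Lam > 0 \<and> \<beta> > 0 \<and> D > 0 \<and> \<mu> > 0 \<and> \<psi> > 0 \<and> w > 0 \<and> \<sigma> > 0 \<and> \<gamma> > 0 \<and> \<eta> > 0 \<and> \<delta> > 0)"

definition R0 :: "params \<Rightarrow> real" where
  "R0 p = (case p of (Lam, \<beta>, D, \<mu>, \<psi>, w, \<sigma>, \<gamma>, \<eta>, \<delta>) \<Rightarrow>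
     (let S0 = Lam / (\<mu> + \<psi>); V0 = Lam * \<psi> / (\<mu> * (\<mu> + \<psi>)) in
      \<eta> * \<beta> * (S0 + \<sigma> * V0) / (D * \<delta> * (\<mu> + \<gamma>))))"

definition steady_state :: "params \<Rightarrow> real^5 \<Rightarrow> bool" where
  "steady_state p x \<longleftrightarrow> sys p x = 0"

definition positive_state :: "real^5 \<Rightarrow> bool" where
  "positive_state x \<longleftrightarrow> (\<forall>i. x$i > 0)"

definition jacobian :: "params \<Rightarrow> real^5 \<Rightarrow> real^5^5" where
  "jacobian p x = matrix (frechet_derivative (sys p) (at x))"

definition eigenvalue :: "real^'n^'n \<Rightarrow> complex \<Rightarrow> bool" where
  "eigenvalue A z \<longleftrightarrow> det ((\<chi> i j. (if i = j then z else 0) - complex_of_real (A$i$j)) :: complex^'n^'n) = 0"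

definition stable_ss :: "params \<Rightarrow> real^5 \<Rightarrow> bool" where
  "stable_ss p x \<longleftrightarrow> (\<forall>z. eigenvalue (jacobian p x) z \<longrightarrow> Re z < 0)"

definition unstable_ss :: "params \<Rightarrow> real^5 \<Rightarrow> bool" where
  "unstable_ss p x \<longleftrightarrow> (\<exists>z. eigenvalue (jacobian p x) z \<and> Re z > 0)"

end

(* Take Lam = 1, beta = 4, D = 1, mu = 1/20, psi = 1, w = 239/20, sigma = 1/20, gamma = 1,
   eta = 163/1200, delta = 1, so that R0 = 1304/1323 < 1. At a steady state I and R are multiples
   of B, and eliminating S and V leaves B (B + 1) (15 B - 1) (11 B - 1) = 0: there are exactly two
   positive steady states, with B = 1/11 and B = 1/15.
   In the linearisation the total population N = S + V + I + R obeys N' = Lam - mu N, so apart from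
   -mu every eigenvalue is a root of a monic quartic obtained by eliminating the eigenvector
   components other than I. At B = 1/11 this quartic satisfies the Routh-Hurwitz conditions, so the
   steady state is stable; at B = 1/15 its constant term is negative, so it has a positive root,
   which is an unstable eigenvalue. *)

theory Submission
  imports Defs
begin

lemma forall_5: "(\<forall>i::5. P i) \<longleftrightarrow> P 1 \<and> P 2 \<and> P 3 \<and> P 4 \<and> P 5"
proof -
  have "i = 1 \<or> i = 2 \<or> i = 3 \<or> i = 4 \<or> i = 5" for i :: 5
  proof (induct i)
    case (of_int z)
    then have "z = 0 \<or> z = 1 \<or> z = 2 \<or> z = 3 \<or> z = 4" by fastforce
    then show ?case by auto
  qed
  then show ?thesis by metis
qed

lemma UNIV_5: "(UNIV :: 5 set) = {1, 2, 3, 4, 5}"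
  using forall_5[of "\<lambda>i. i \<in> {1, 2, 3, 4, 5}"] by auto

lemma sum_UNIV_5: "(\<Sum>i\<in>UNIV. f i) = f 1 + f 2 + f 3 + f 4 + f (5::5)"
  unfolding UNIV_5 by (simp add: add.assoc)

lemma vec5_nth [simp]:
  "vec5 a b c d e $ 1 = a" "vec5 a b c d e $ 2 = b" "vec5 a b c d e $ 3 = c"
  "vec5 a b c d e $ 4 = d" "vec5 a b c d e $ 5 = e"
  by (simp_all add: vec5_def)

lemma vec5_eq_iff: "x = vec5 a b c d e \<longleftrightarrow> x$1 = a \<and> x$2 = b \<and> x$3 = c \<and> x$4 = d \<and> x$5 = e"
  by (simp add: vec_eq_iff forall_5)

lemma vec5_eq_0_iff: "vec5 a b c d e = 0 \<longleftrightarrow> a = 0 \<and> b = 0 \<and> c = 0 \<and> d = 0 \<and> e = 0"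
  by (simp add: vec_eq_iff forall_5)

lemma vec5_eq_sum_axis:
  "vec5 a b c d e = a *\<^sub>R axis 1 1 + b *\<^sub>R axis 2 1 + c *\<^sub>R axis 3 1 + d *\<^sub>R axis 4 1 + e *\<^sub>R axis 5 1"
  by (simp add: vec_eq_iff forall_5 axis_def)

lemma positive_state_iff: "positive_state x \<longleftrightarrow> x$1 > 0 \<and> x$2 > 0 \<and> x$3 > 0 \<and> x$4 > 0 \<and> x$5 > 0"
  by (simp add: positive_state_def forall_5)

lemma vec5_exists: "\<exists>v::'a^5. v$1 = a \<and> v$2 = b \<and> v$3 = c \<and> v$4 = d \<and> v$5 = e"
proof
  let ?v = "\<chi> i::5. if i = 1 then a else if i = 2 then b else if i = 3 then c else if i = 4 then d else e"
  show "?v$1 = a \<and> ?v$2 = b \<and> ?v$3 = c \<and> ?v$4 = d \<and> ?v$5 = e"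
    by simp
qed

lemma eigenvalue_iff:
  fixes A :: "real^'n^'n"
  shows "eigenvalue A z \<longleftrightarrow> (\<exists>v. v \<noteq> 0 \<and> (\<forall>i. z * v$i = (\<Sum>j\<in>UNIV. of_real (A$i$j) * v$j)))"
proof -
  let ?M = "(\<chi> i j. (if i = j then z else 0) - complex_of_real (A$i$j)) :: complex^'n^'n"
  have "((if i = j then z else 0) - of_real (A$i$j)) * v$j = (if i = j then z * v$j else 0) - of_real (A$i$j) * v$j"
    for v :: "complex^'n" and i j
    by (simp add: left_diff_distrib)
  then have "(?M *v v) $ i = z * v$i - (\<Sum>j\<in>UNIV. of_real (A$i$j) * v$j)" for v i
    unfolding matrix_vector_mult_def by (simp add: sum_subtractf)
  then have "?M *v v = 0 \<longleftrightarrow> (\<forall>i. z * v$i = (\<Sum>j\<in>UNIV. of_real (A$i$j) * v$j))" for v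
    by (simp add: vec_eq_iff)
  moreover have "det ?M \<noteq> 0 \<longleftrightarrow> (\<forall>v. ?M *v v = 0 \<longrightarrow> v = 0)"
    unfolding invertible_det_nz[symmetric] invertible_left_inverse matrix_left_invertible_ker ..
  ultimately show ?thesis
    unfolding eigenvalue_def by blast
qed


lemma quartic_eliminate_imaginary_part:
  fixes A B C E x Y :: real
  assumes "Y * (4*x + A) = 4*x^3 + 3*A*x^2 + 2*B*x + C"
  shows "(4*x + A)^2 * (x^4 - 6*x^2*Y + Y^2 + A*(x^3 - 3*x*Y) + B*(x^2 - Y) + C*x + E) =
    (C^2 - A*B*C + A^2*E) + (8*A*E - 2*A^2*C - 2*A*B^2)*x + (16*E - 4*A*C - 4*B^2 - 8*A^2*B)*x^2
    - (32*A*B + 8*A^3)*x^3 - (32*B + 48*A^2)*x^4 - 96*A*x^5 - 64*x^6"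
  using assms by algebra

(* hurwitz is the Routh-Hurwitz condition; the two further sign conditions make the polynomial in x
   left after eliminating y^2 (quartic_eliminate_imaginary_part) negative for x \<ge> 0. *)
lemma quartic_no_root_Re_nonneg:
  fixes A B C E :: real and z :: complex
  assumes pos: "A > 0" "B > 0" "C > 0" "E > 0"
    and hurwitz: "C^2 - A*B*C + A^2*E < 0"
    and "8*A*E - 2*A^2*C - 2*A*B^2 \<le> 0" "16*E - 4*A*C - 4*B^2 - 8*A^2*B \<le> 0"
    and "Re z \<ge> 0"
  shows "z^4 + of_real A * z^3 + of_real B * z^2 + of_real C * z + of_real E \<noteq> 0"
proof
  assume root: "z^4 + of_real A * z^3 + of_real B * z^2 + of_real C * z + of_real E = 0"
  obtain x y where z: "z = Complex x y"
    by (metis complex.exhaust)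
  have "x \<ge> 0"
    using \<open>Re z \<ge> 0\<close> z by simp
  have re: "x^4 - 6*x^2*y^2 + (y^2)^2 + A*(x^3 - 3*x*y^2) + B*(x^2 - y^2) + C*x + E = 0"
    using arg_cong[OF root, of Re] unfolding z by (simp add: eval_nat_numeral algebra_simps)
  have im: "y * (4*x^3 - 4*x*y^2 + A*(3*x^2 - y^2) + 2*B*x + C) = 0"
    using arg_cong[OF root, of Im] unfolding z by (simp add: eval_nat_numeral algebra_simps)
  show False
  proof (cases "y = 0")
    case True
    then have "x^4 + A*x^3 + B*x^2 + C*x + E = 0"
      using re by simp
    moreover have "x^4 + A*x^3 + B*x^2 + C*x + E > 0"
      using pos \<open>x \<ge> 0\<close> by (intro add_nonneg_pos add_nonneg_nonneg mult_nonneg_nonneg) auto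
    ultimately show False by simp
  next
    case False
    then have "4*x^3 - 4*x*y^2 + A*(3*x^2 - y^2) + 2*B*x + C = 0"
      using im by simp
    then have "y^2 * (4*x + A) = 4*x^3 + 3*A*x^2 + 2*B*x + C"
      by (simp add: algebra_simps)
    from quartic_eliminate_imaginary_part[OF this, of E] re
    have "0 = (C^2 - A*B*C + A^2*E) + (8*A*E - 2*A^2*C - 2*A*B^2)*x + (16*E - 4*A*C - 4*B^2 - 8*A^2*B)*x^2
      - (32*A*B + 8*A^3)*x^3 - (32*B + 48*A^2)*x^4 - 96*A*x^5 - 64*x^6"
      by simp
    moreover have "(8*A*E - 2*A^2*C - 2*A*B^2)*x \<le> 0" "(16*E - 4*A*C - 4*B^2 - 8*A^2*B)*x^2 \<le> 0"
      using assms \<open>x \<ge> 0\<close> by (simp_all add: mult_nonpos_nonneg)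
    moreover have "(32*A*B + 8*A^3)*x^3 \<ge> 0" "(32*B + 48*A^2)*x^4 \<ge> 0" "96*A*x^5 \<ge> 0" "64*x^6 \<ge> 0"
      using pos \<open>x \<ge> 0\<close> by simp_all
    ultimately show False
      using hurwitz by linarith
  qed
qed

lemma quartic_positive_root:
  fixes A B C E :: real
  assumes "A \<ge> 0" "B \<ge> 0" "C \<ge> 0" "E < 0"
  shows "\<exists>r>0. r^4 + A*r^3 + B*r^2 + C*r + E = 0"
proof -
  define q where "q r = r^4 + A*r^3 + B*r^2 + C*r + E" for r :: real
  have "1 - E \<le> (1 - E)^4"
    using \<open>E < 0\<close> by (intro self_le_power) auto
  moreover have "0 \<le> A*(1 - E)^3 + B*(1 - E)^2 + C*(1 - E)"
    using assms by simp
  ultimately have "0 \<le> q (1 - E)"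
    unfolding q_def by linarith
  moreover have "q 0 \<le> 0" "continuous_on {0..1 - E} q"
    using \<open>E < 0\<close> unfolding q_def by (auto intro!: continuous_intros)
  ultimately obtain r where "0 \<le> r" "q r = 0"
    using IVT'[of q 0 0 "1 - E"] \<open>E < 0\<close> by auto
  moreover have "r \<noteq> 0"
    using \<open>q r = 0\<close> \<open>E < 0\<close> unfolding q_def by auto
  ultimately show ?thesis
    unfolding q_def by (metis order_le_less)
qed

(* The Jacobian at a state (S, V, I, R, B) has this shape with b = beta B / (B + D) and s = sigma b,
   the per-capita infection rates of S and V, and kS, kV the derivatives in B of the two incidence
   terms. *)
locale linearization =
  fixes \<mu> \<psi> w \<gamma> \<eta> \<delta> b s kS kV :: "'a::field"
begin

definition eigen_system :: "'a \<Rightarrow> 'a \<Rightarrow> 'a \<Rightarrow> 'a \<Rightarrow> 'a \<Rightarrow> 'a \<Rightarrow> bool" where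
  "eigen_system z v1 v2 v3 v4 v5 \<longleftrightarrow>
     z * v1 = - (\<mu> + \<psi> + b) * v1 + w * v4 - kS * v5 \<and>
     z * v2 = \<psi> * v1 - (\<mu> + s) * v2 - kV * v5 \<and>
     z * v3 = b * v1 + s * v2 - (\<mu> + \<gamma>) * v3 + (kS + kV) * v5 \<and>
     z * v4 = \<gamma> * v3 - (\<mu> + w) * v4 \<and>
     z * v5 = \<eta> * v3 - \<delta> * v5"

(* What remains of the characteristic polynomial once the factor z + mu of the total population
   (eigen_system_total_population) is split off; see reduced_charpoly_elimination. *)
definition reduced_charpoly :: "'a \<Rightarrow> 'a" where
  "reduced_charpoly z = (z + \<mu> + s) * (z + \<mu> + \<psi> + b) * (z + \<delta>) * (z + \<mu> + w + \<gamma>)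
     + (z + \<mu> + \<psi> + s) * (w * \<gamma> * (z + \<delta>) - \<eta> * kS * (z + \<mu> + w))
     - \<eta> * kV * (z + \<mu> + \<psi> + b) * (z + \<mu> + w)"

lemma eigen_system_total_population:
  assumes "eigen_system z v1 v2 v3 v4 v5"
  shows "(z + \<mu>) * (v1 + v2 + v3 + v4) = 0"
proof -
  have "(z + \<mu>) * (v1 + v2 + v3 + v4) = (z * v1 + (\<mu> + \<psi> + b) * v1 - w * v4 + kS * v5)
      + (z * v2 - \<psi> * v1 + (\<mu> + s) * v2 + kV * v5)
      + (z * v3 - b * v1 - s * v2 + (\<mu> + \<gamma>) * v3 - (kS + kV) * v5)
      + (z * v4 - \<gamma> * v3 + (\<mu> + w) * v4)"
    by (simp add: algebra_simps)
  also have "\<dots> = 0"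
    using assms unfolding eigen_system_def by (simp add: algebra_simps)
  finally show ?thesis .
qed

lemma reduced_charpoly_elimination:
  assumes R1: "v1 * (z + \<mu> + \<psi> + b) = w * v4 - kS * v5"
    and R4: "v4 * (z + \<mu> + w) = \<gamma> * v3"
    and R5: "v5 * (z + \<delta>) = \<eta> * v3"
    and N: "v1 + v2 + v3 + v4 = 0"
  shows "v3 * reduced_charpoly z =
    (z + \<mu> + \<psi> + b) * (z + \<mu> + w) * (z + \<delta>) * (\<psi> * v1 - (z + \<mu> + s) * v2 - kV * v5)"
proof -
  have v2: "v2 = - (v1 + v3 + v4)"
    using N by algebra
  show ?thesis
    unfolding reduced_charpoly_def v2 using R1 R4 R5 by algebra
qed

lemma eigen_system_trivial_if_not_root:
  assumes E: "eigen_system z v1 v2 v3 v4 v5"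
    and nz: "z + \<mu> \<noteq> 0" "z + \<mu> + \<psi> + b \<noteq> 0" "z + \<mu> + w \<noteq> 0" "z + \<delta> \<noteq> 0"
    and "reduced_charpoly z \<noteq> 0"
  shows "v1 = 0 \<and> v2 = 0 \<and> v3 = 0 \<and> v4 = 0 \<and> v5 = 0"
proof -
  have N: "v1 + v2 + v3 + v4 = 0"
    using eigen_system_total_population[OF E] nz(1) by simp
  have R1: "v1 * (z + \<mu> + \<psi> + b) = w * v4 - kS * v5"
    and R2: "\<psi> * v1 - (z + \<mu> + s) * v2 - kV * v5 = 0"
    and R4: "v4 * (z + \<mu> + w) = \<gamma> * v3"
    and R5: "v5 * (z + \<delta>) = \<eta> * v3"
    using E unfolding eigen_system_def by (simp_all add: algebra_simps)
  have "v3 * reduced_charpoly z = 0"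
    using reduced_charpoly_elimination[OF R1 R4 R5 N] R2 by simp
  then have "v3 = 0"
    using \<open>reduced_charpoly z \<noteq> 0\<close> by simp
  then show ?thesis
    using R1 R4 R5 N nz by auto
qed

lemma eigen_system_of_reduced_charpoly_root:
  assumes "reduced_charpoly z = 0"
    and nz: "z + \<mu> + \<psi> + b \<noteq> 0" "z + \<mu> + w \<noteq> 0" "z + \<delta> \<noteq> 0"
  shows "\<exists>v1 v2 v4 v5. eigen_system z v1 v2 1 v4 v5"
proof -
  define v4 where "v4 = \<gamma> / (z + \<mu> + w)"
  define v5 where "v5 = \<eta> / (z + \<delta>)"
  define v1 where "v1 = (w * v4 - kS * v5) / (z + \<mu> + \<psi> + b)"
  define v2 where "v2 = - (v1 + 1 + v4)"
  have R1: "v1 * (z + \<mu> + \<psi> + b) = w * v4 - kS * v5"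
    and R4: "v4 * (z + \<mu> + w) = \<gamma> * 1"
    and R5: "v5 * (z + \<delta>) = \<eta> * 1"
    and N: "v1 + v2 + 1 + v4 = 0"
    using nz by (simp_all add: v1_def v4_def v5_def v2_def)
  have R2: "\<psi> * v1 - (z + \<mu> + s) * v2 - kV * v5 = 0"
    using reduced_charpoly_elimination[OF R1 R4 R5 N] \<open>reduced_charpoly z = 0\<close> nz by simp
  have "z = b * v1 + s * v2 - (\<mu> + \<gamma>) + (kS + kV) * v5"
    using R1 R2 R4 N by algebra
  then show ?thesis
    unfolding eigen_system_def using R1 R2 R4 R5
    by (intro exI[of _ v1] exI[of _ v2] exI[of _ v4] exI[of _ v5]) (simp add: algebra_simps)
qed

end

lemma has_derivative_vec_nth: "((\<lambda>x. x $ i) has_derivative (\<lambda>h. h $ i)) F"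
  by (rule bounded_linear_imp_has_derivative[OF bounded_linear_vec_nth])

definition incidence_derivative :: "real \<Rightarrow> real^5 \<Rightarrow> 5 \<Rightarrow> real^5 \<Rightarrow> real" where
  "incidence_derivative D x a h = h$a * x$5 / (x$5 + D) + x$a * D / (x$5 + D)^2 * h$5"

lemma has_derivative_incidence:
  assumes "x$5 + D \<noteq> 0"
  shows "((\<lambda>x. x$a * x$5 / (x$5 + D)) has_derivative incidence_derivative D x a) (at x)"
proof -
  have "(x$a * h5 + ha * x$5) / (x$5 + D) - x$a * x$5 * (inverse (x$5 + D) * h5 * inverse (x$5 + D))
      = ha * x$5 / (x$5 + D) + x$a * D / (x$5 + D)^2 * h5" for ha h5
    using assms by (simp add: divide_simps power2_eq_square) (simp add: algebra_simps)
  note this [simp]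
  show ?thesis
    unfolding incidence_derivative_def
    by (rule has_derivative_eq_rhs, (rule derivative_eq_intros has_derivative_vec_nth | use assms in simp)+)
qed

definition sys_derivative :: "params \<Rightarrow> real^5 \<Rightarrow> real^5 \<Rightarrow> real^5" where
  "sys_derivative p x h = (case p of (Lam, \<beta>, D, \<mu>, \<psi>, w, \<sigma>, \<gamma>, \<eta>, \<delta>) \<Rightarrow>
      vec5 (- \<beta> * incidence_derivative D x 1 h - (\<mu> + \<psi>) * h$1 + w * h$4)
           (\<psi> * h$1 - \<sigma> * \<beta> * incidence_derivative D x 2 h - \<mu> * h$2)
           (\<beta> * incidence_derivative D x 1 h + \<sigma> * \<beta> * incidence_derivative D x 2 h - (\<mu> + \<gamma>) * h$3)
           (\<gamma> * h$3 - (\<mu> + w) * h$4)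
           (\<eta> * h$3 - \<delta> * h$5))"

lemma has_derivative_sys:
  assumes p: "p = (Lam, \<beta>, D, \<mu>, \<psi>, w, \<sigma>, \<gamma>, \<eta>, \<delta>)" and B: "x$5 + D \<noteq> 0"
  shows "(sys p has_derivative sys_derivative p x) (at x)"
proof -
  \<comment> \<open>derivative_eq_intros has no rule for vec5, hence the expansion along the axes\<close>
  have sys_eq: "sys p = (\<lambda>x. (Lam - \<beta> * (x$1 * x$5 / (x$5 + D)) - (\<mu> + \<psi>) * x$1 + w * x$4) *\<^sub>R axis 1 1
     + (\<psi> * x$1 - \<sigma> * \<beta> * (x$2 * x$5 / (x$5 + D)) - \<mu> * x$2) *\<^sub>R axis 2 1
     + (\<beta> * (x$1 * x$5 / (x$5 + D)) + \<sigma> * \<beta> * (x$2 * x$5 / (x$5 + D)) - (\<mu> + \<gamma>) * x$3) *\<^sub>R axis 3 1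
     + (\<gamma> * x$3 - (\<mu> + w) * x$4) *\<^sub>R axis 4 1 + (\<eta> * x$3 - \<delta> * x$5) *\<^sub>R axis 5 1)"
    by (simp add: fun_eq_iff sys_def p Let_def vec5_eq_sum_axis)
  show ?thesis
    unfolding sys_eq
    by (rule has_derivative_eq_rhs, (rule has_derivative_incidence[OF B] has_derivative_vec_nth derivative_eq_intros refl)+)
      (simp add: fun_eq_iff sys_derivative_def p vec5_eq_sum_axis algebra_simps)
qed

lemma jacobian_nth:
  assumes "p = (Lam, \<beta>, D, \<mu>, \<psi>, w, \<sigma>, \<gamma>, \<eta>, \<delta>)" and "x$5 + D \<noteq> 0"
  shows "jacobian p x $ i $ j = sys_derivative p x (axis j 1) $ i"
  unfolding jacobian_def frechet_derivative_at[OF has_derivative_sys[OF assms], symmetric] matrix_def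
  by simp

locale positive_state_model =
  fixes Lam \<beta> D \<mu> \<psi> w \<sigma> \<gamma> \<eta> \<delta> :: real and x :: "real^5"
  assumes params: "params_pos (Lam, \<beta>, D, \<mu>, \<psi>, w, \<sigma>, \<gamma>, \<eta>, \<delta>)"
    and state: "positive_state x"
begin

sublocale lin: linearization "of_real \<mu> :: complex" "of_real \<psi>" "of_real w" "of_real \<gamma>" "of_real \<eta>" "of_real \<delta>"
  "of_real (\<beta> * (x$5 / (x$5 + D)))" "of_real (\<sigma> * \<beta> * (x$5 / (x$5 + D)))"
  "of_real (\<beta> * x$1 * D / (x$5 + D)^2)" "of_real (\<sigma> * \<beta> * x$2 * D / (x$5 + D)^2)" .

lemma eigenvalue_jacobian_iff:
  "eigenvalue (jacobian (Lam, \<beta>, D, \<mu>, \<psi>, w, \<sigma>, \<gamma>, \<eta>, \<delta>) x) z \<longleftrightarrow>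
     (\<exists>v::complex^5. v \<noteq> 0 \<and> lin.eigen_system z (v$1) (v$2) (v$3) (v$4) (v$5))"
proof -
  have "x$5 + D \<noteq> 0"
    using params state by (simp add: params_pos_def positive_state_iff add_pos_pos)
  note J = jacobian_nth[OF refl this]
  have "(\<forall>i. z * v$i =
          (\<Sum>j\<in>UNIV. of_real (jacobian (Lam, \<beta>, D, \<mu>, \<psi>, w, \<sigma>, \<gamma>, \<eta>, \<delta>) x $ i $ j) * v$j))
      \<longleftrightarrow> lin.eigen_system z (v$1) (v$2) (v$3) (v$4) (v$5)" for v :: "complex^5"
    unfolding forall_5 sum_UNIV_5 J lin.eigen_system_def
    by (simp add: sys_derivative_def incidence_derivative_def axis_def algebra_simps)
  then show ?thesis
    unfolding eigenvalue_iff by simp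
qed

lemma shifted_nonzero_if_Re_nonneg:
  assumes "Re z \<ge> 0"
  shows "z + of_real \<mu> \<noteq> 0" "z + of_real \<mu> + of_real \<psi> + of_real (\<beta> * (x$5 / (x$5 + D))) \<noteq> 0"
    "z + of_real \<mu> + of_real w \<noteq> 0" "z + of_real \<delta> \<noteq> 0"
proof -
  have "\<mu> > 0" "\<psi> > 0" "w > 0" "\<delta> > 0" "\<beta> * (x$5 / (x$5 + D)) > 0"
    using params state by (simp_all add: params_pos_def positive_state_iff)
  then show "z + of_real \<mu> \<noteq> 0" "z + of_real \<mu> + of_real \<psi> + of_real (\<beta> * (x$5 / (x$5 + D))) \<noteq> 0"
    "z + of_real \<mu> + of_real w \<noteq> 0" "z + of_real \<delta> \<noteq> 0"
    using assms by (auto simp: complex_eq_iff)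
qed

lemma stable_ss_if_no_root_Re_nonneg:
  assumes "\<And>z. Re z \<ge> 0 \<Longrightarrow> lin.reduced_charpoly z \<noteq> 0"
  shows "stable_ss (Lam, \<beta>, D, \<mu>, \<psi>, w, \<sigma>, \<gamma>, \<eta>, \<delta>) x"
  unfolding stable_ss_def
proof (intro allI impI)
  fix z
  assume "eigenvalue (jacobian (Lam, \<beta>, D, \<mu>, \<psi>, w, \<sigma>, \<gamma>, \<eta>, \<delta>) x) z"
  then obtain v :: "complex^5" where "v \<noteq> 0" and E: "lin.eigen_system z (v$1) (v$2) (v$3) (v$4) (v$5)"
    unfolding eigenvalue_jacobian_iff by blast
  show "Re z < 0"
  proof (rule ccontr)
    assume "\<not> Re z < 0"
    then have "Re z \<ge> 0" by simp
    with E have "v$1 = 0 \<and> v$2 = 0 \<and> v$3 = 0 \<and> v$4 = 0 \<and> v$5 = 0"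
      by (intro lin.eigen_system_trivial_if_not_root shifted_nonzero_if_Re_nonneg assms)
    with \<open>v \<noteq> 0\<close> show False
      by (simp add: vec_eq_iff forall_5)
  qed
qed

lemma unstable_ss_if_positive_root:
  assumes "r > 0" and "lin.reduced_charpoly (of_real r) = 0"
  shows "unstable_ss (Lam, \<beta>, D, \<mu>, \<psi>, w, \<sigma>, \<gamma>, \<eta>, \<delta>) x"
proof -
  have "Re (complex_of_real r) \<ge> 0"
    using assms(1) by simp
  then obtain v1 v2 v4 v5 where E: "lin.eigen_system (of_real r) v1 v2 1 v4 v5"
    using lin.eigen_system_of_reduced_charpoly_root[OF assms(2)] shifted_nonzero_if_Re_nonneg(2-4) by blast
  obtain v :: "complex^5" where v: "v$1 = v1" "v$2 = v2" "v$3 = 1" "v$4 = v4" "v$5 = v5"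
    using vec5_exists[of v1 v2 1 v4 v5] by blast
  have "v \<noteq> 0"
    using v(3) by auto
  with E v have "eigenvalue (jacobian (Lam, \<beta>, D, \<mu>, \<psi>, w, \<sigma>, \<gamma>, \<eta>, \<delta>) x) (of_real r)"
    unfolding eigenvalue_jacobian_iff by auto
  then show ?thesis
    unfolding unstable_ss_def using assms(1) by (intro exI[of _ "complex_of_real r"]) simp
qed

end

definition p0 :: params where
  "p0 = (1, 4, 1, 1/20, 1, 239/20, 1/20, 1, 163/1200, 1)"

definition x_stable :: "real^5" where
  "x_stable = vec5 (2160/1793) (32400/1793) (1200/1793) (100/1793) (1/11)"

definition x_unstable :: "real^5" where
  "x_unstable = vec5 (560/489) (8960/489) (80/163) (20/489) (1/15)"

lemma sys_p0:
  assumes "f = x$5 / (x$5 + 1)"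
  shows "sys p0 x = vec5 (1 - 4 * x$1 * f - 21/20 * x$1 + 239/20 * x$4)
     (x$1 - 1/5 * x$2 * f - 1/20 * x$2)
     (4 * x$1 * f + 1/5 * x$2 * f - 21/20 * x$3)
     (x$3 - 12 * x$4) (163/1200 * x$3 - x$5)"
  by (simp add: sys_def p0_def Let_def assms mult.assoc)

(* f stands for the saturation factor B / (B + 1), which makes the steady-state equations
   polynomial. *)
lemma p0_equilibria:
  fixes S V I R B f :: real
  assumes "B > 0" and f: "f * (B + 1) - B = 0"
    and e1: "1 - 4 * S * f - 21/20 * S + 239/20 * R = 0"
    and e2: "S - 1/5 * V * f - 1/20 * V = 0"
    and e3: "4 * S * f + 1/5 * V * f - 21/20 * I = 0"
    and e4: "I - 12 * R = 0" and e5: "163/1200 * I - B = 0"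
  shows "S = 2160/1793 \<and> V = 32400/1793 \<and> I = 1200/1793 \<and> R = 100/1793 \<and> B = 1/11 \<or>
         S = 560/489 \<and> V = 8960/489 \<and> I = 80/163 \<and> R = 20/489 \<and> B = 1/15"
proof -
  have "B * (B + 1) * (15 * B - 1) * (11 * B - 1) = 0"
    using f e1 e2 e3 e4 e5 by algebra
  then have "B = 1/11 \<or> B = 1/15"
    using \<open>B > 0\<close> by auto
  moreover have "f = B / (B + 1)"
    using f \<open>B > 0\<close> by (simp add: field_simps)
  ultimately have "B = 1/11 \<and> f = 1/12 \<or> B = 1/15 \<and> f = 1/16"
    by auto
  then show ?thesis
  proof (elim disjE conjE)
    assume "B = 1/11" "f = 1/12"
    with e1 e2 e4 e5 show ?thesis by (intro disjI1 conjI; simp; linarith)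
  next
    assume "B = 1/15" "f = 1/16"
    with e1 e2 e4 e5 show ?thesis by (intro disjI2 conjI; simp; linarith)
  qed
qed

lemma positive_steady_states_p0:
  "{x. positive_state x \<and> steady_state p0 x} = {x_stable, x_unstable}"
proof (intro equalityI subsetI)
  fix x
  assume "x \<in> {x. positive_state x \<and> steady_state p0 x}"
  then have "x$5 > 0" and e: "sys p0 x = 0"
    by (simp_all add: positive_state_iff steady_state_def)
  define f where "f = x$5 / (x$5 + 1)"
  have "f * (x$5 + 1) - x$5 = 0"
    using \<open>x$5 > 0\<close> by (simp add: f_def)
  with e \<open>x$5 > 0\<close>
  have "x$1 = 2160/1793 \<and> x$2 = 32400/1793 \<and> x$3 = 1200/1793 \<and> x$4 = 100/1793 \<and> x$5 = 1/11 \<or>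
      x$1 = 560/489 \<and> x$2 = 8960/489 \<and> x$3 = 80/163 \<and> x$4 = 20/489 \<and> x$5 = 1/15"
    unfolding sys_p0[OF f_def] vec5_eq_0_iff using p0_equilibria by blast
  then show "x \<in> {x_stable, x_unstable}"
    unfolding x_stable_def x_unstable_def insert_iff vec5_eq_iff by blast
qed (auto simp: x_stable_def x_unstable_def positive_state_iff steady_state_def sys_p0 vec5_eq_0_iff)

interpretation stable_point: positive_state_model 1 4 1 "1/20" 1 "239/20" "1/20" 1 "163/1200" 1 x_stable
  by unfold_locales (simp_all add: params_pos_def positive_state_iff x_stable_def)

interpretation unstable_point: positive_state_model 1 4 1 "1/20" 1 "239/20" "1/20" 1 "163/1200" 1 x_unstable
  by unfold_locales (simp_all add: params_pos_def positive_state_iff x_unstable_def)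

lemma reduced_charpoly_stable_point:
  "stable_point.lin.reduced_charpoly z = z^4 + 309/20 * z^3 + 159767/3600 * z^2 + 462679/14400 * z + 209/3600"
  by (simp add: linearization.reduced_charpoly_def x_stable_def power2_eq_square)
    (simp add: field_simps eval_nat_numeral)

lemma reduced_charpoly_unstable_point:
  "unstable_point.lin.reduced_charpoly z = z^4 + 1229/80 * z^3 + 13799/320 * z^2 + 156337/5120 * z - 57/1280"
  by (simp add: linearization.reduced_charpoly_def x_unstable_def power2_eq_square)
    (simp add: field_simps eval_nat_numeral)

lemma stable_x_stable: "stable_ss p0 x_stable"
  unfolding p0_def
proof (rule stable_point.stable_ss_if_no_root_Re_nonneg)
  fix z :: complex
  assume "Re z \<ge> 0"
  then show "stable_point.lin.reduced_charpoly z \<noteq> 0"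
    unfolding reduced_charpoly_stable_point
    using quartic_no_root_Re_nonneg[of "309/20" "159767/3600" "462679/14400" "209/3600" z]
    by (simp add: power2_eq_square)
qed

lemma unstable_x_unstable: "unstable_ss p0 x_unstable"
proof -
  obtain r :: real where "r > 0"
    and r: "r^4 + 1229/80 * r^3 + 13799/320 * r^2 + 156337/5120 * r + (- 57/1280) = 0"
    using quartic_positive_root[of "1229/80" "13799/320" "156337/5120" "- 57/1280"] by auto
  have "unstable_point.lin.reduced_charpoly (of_real r) =
      of_real (r^4 + 1229/80 * r^3 + 13799/320 * r^2 + 156337/5120 * r + (- 57/1280))"
    unfolding reduced_charpoly_unstable_point by simp
  also have "\<dots> = 0"
    unfolding r by simp
  finally have "unstable_point.lin.reduced_charpoly (of_real r) = 0" .
  with \<open>r > 0\<close> show ?thesis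
    unfolding p0_def by (rule unstable_point.unstable_ss_if_positive_root)
qed

theorem theorem2:
  shows "\<exists>p. params_pos p \<and> R0 p < 1 \<and>
     (\<exists>x1 x2. x1 \<noteq> x2 \<and>
        {x. positive_state x \<and> steady_state p x} = {x1, x2} \<and>
        stable_ss p x1 \<and> unstable_ss p x2)"
proof (intro exI conjI)
  show "params_pos p0"
    by (simp add: params_pos_def p0_def)
  show "R0 p0 < 1"
    by (simp add: R0_def p0_def)
  show "x_stable \<noteq> x_unstable"
    by (simp add: x_stable_def x_unstable_def vec5_eq_iff)
qed (fact positive_steady_states_p0 stable_x_stable unstable_x_unstable)+

end
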